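(* Fix a conic $\mathcal H$ containing points $A, B, C$, and a line $\ell$ containing a point $D$. For a point $E$ varying on $\mathcal H$, let the conic $\mathcal E$ through $A,B,C,D,E$ meet $\ell$ at $F \neq D$. Then line $EF$ passes through a fixed point $G$ on $\mathcal H$ (independent of $E$). *)

theory Defs
  imports "HOL-Analysis.Analysis"
begin

text \<open>Real projective plane in homogeneous coordinates: a point is a nonzero
vector of real^3, two such vectors represent the same point iff they are
nonzero multiples of each other.  A line is a nonzero vector L, incidence
is L \<bullet> p = 0.  A conic is a nonzero symmetric 3x3 matrix M (up to a nonzero
scalar), incidence is p \<bullet> (M *v p) = 0; it is nondegenerate iff det M \<noteq> 0.\<close>

definition pt :: "real^3 \<Rightarrow> bool" where
  "pt p \<longleftrightarrow> p \<noteq> 0"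

definition same_pt :: "real^3 \<Rightarrow> real^3 \<Rightarrow> bool" where
  "same_pt p q \<longleftrightarrow> (\<exists>c. c \<noteq> 0 \<and> q = c *\<^sub>R p)"

definition is_line :: "real^3 \<Rightarrow> bool" where
  "is_line L \<longleftrightarrow> L \<noteq> 0"

definition on_line :: "real^3 \<Rightarrow> real^3 \<Rightarrow> bool" where
  "on_line p L \<longleftrightarrow> L \<bullet> p = 0"

definition is_conic :: "real^3^3 \<Rightarrow> bool" where
  "is_conic M \<longleftrightarrow> M \<noteq> 0 \<and> transpose M = M"

definition nondeg_conic :: "real^3^3 \<Rightarrow> bool" where
  "nondeg_conic M \<longleftrightarrow> is_conic M \<and> det M \<noteq> 0"

definition on_conic :: "real^3 \<Rightarrow> real^3^3 \<Rightarrow> bool" where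
  "on_conic p M \<longleftrightarrow> p \<bullet> (M *v p) = 0"

definition same_conic :: "real^3^3 \<Rightarrow> real^3^3 \<Rightarrow> bool" where
  "same_conic M N \<longleftrightarrow> (\<exists>c. c \<noteq> 0 \<and> N = c *\<^sub>R M)"

definition unique_conic_through :: "real^3^3 \<Rightarrow> (real^3) set \<Rightarrow> bool" where
  "unique_conic_through M S \<longleftrightarrow>
     is_conic M \<and> (\<forall>p\<in>S. on_conic p M) \<and>
     (\<forall>N. is_conic N \<and> (\<forall>p\<in>S. on_conic p N) \<longrightarrow> same_conic M N)"

definition on_join :: "real^3 \<Rightarrow> real^3 \<Rightarrow> real^3 \<Rightarrow> bool" where
  "on_join G E F \<longleftrightarrow> (cross3 E F) \<bullet> G = 0"

end

theory Submission
  imports Defs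
begin

text \<open>If D is one of A, B, C, only four points are
  prescribed and no conic through them is unique; if L passes through a vertex X \<noteq> D, then F = X;
  if D lies on H, the conic through A, B, C, D, E is H itself and F is the second intersection of L
  with H. In general position let X be the intersection of L with BC and write the points of L as
  r X + t D. The conic through A, B, C, D, E lies in the pencil spanned by H and the line pair
  EA \<union> BC; evaluating it on L shows that AE meets L at a point phi(F) depending linearly on F.
  Writing E = a A + b phi(F), the incidence of E with H reads 2 a H(A, phi) + b H(phi, phi) = 0,
  and a polynomial identity then gives det(E, F, G) = 0 for an explicit point G of H whose
  coordinates in the basis A, X, D are built from the values of the bilinear form of H.\<close>

unbundle cross3_syntax

lemma cross_eq_0_imp_scaleR:
  fixes u w :: "real^3"
  assumes "u \<times> w = 0" "u \<noteq> 0"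
  shows "\<exists>k. w = k *\<^sub>R u"
  using assms by (metis cross_eq_0 collinear_lemma scaleR_zero_left)

lemma orthogonal_cross_imp_lincomb:
  fixes u v w :: "real^3"
  assumes "u \<times> v \<noteq> 0" "(u \<times> v) \<bullet> w = 0"
  shows "\<exists>x y. w = x *\<^sub>R u + y *\<^sub>R v"
proof -
  let ?n = "u \<times> v"
  have n: "?n \<bullet> ?n \<noteq> 0"
    using assms(1) by simp
  have "(?n \<bullet> ?n) *\<^sub>R w
      = ((w \<times> v) \<bullet> ?n) *\<^sub>R u + ((u \<times> w) \<bullet> ?n) *\<^sub>R v + (?n \<bullet> w) *\<^sub>R ?n"
    by (simp add: cross3_simps forall_3)
  then have "(?n \<bullet> ?n) *\<^sub>R w = ((w \<times> v) \<bullet> ?n) *\<^sub>R u + ((u \<times> w) \<bullet> ?n) *\<^sub>R v"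
    using assms(2) by simp
  then have "w = inverse (?n \<bullet> ?n) *\<^sub>R (((w \<times> v) \<bullet> ?n) *\<^sub>R u + ((u \<times> w) \<bullet> ?n) *\<^sub>R v)"
    using n by (metis scaleR_scaleR left_inverse scaleR_one)
  then show ?thesis
    by (metis scaleR_add_right scaleR_scaleR)
qed

lemma on_line_lincomb:
  fixes L p q w :: "real^3"
  assumes "L \<noteq> 0" "L \<bullet> p = 0" "L \<bullet> q = 0" "L \<bullet> w = 0" "p \<times> q \<noteq> 0"
  shows "\<exists>x y. w = x *\<^sub>R p + y *\<^sub>R q"
proof -
  have "L \<times> (p \<times> q) = (L \<bullet> q) *\<^sub>R p - (L \<bullet> p) *\<^sub>R q"
    by (simp add: cross3_simps forall_3)
  then obtain k where "p \<times> q = k *\<^sub>R L"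
    using assms(1-3) cross_eq_0_imp_scaleR by auto
  then show ?thesis
    using assms(4,5) orthogonal_cross_imp_lincomb by simp
qed

lemma triple_product_lincomb3:
  fixes u v w :: "real^3"
  shows "((a1 *\<^sub>R u + a2 *\<^sub>R v + a3 *\<^sub>R w) \<times> (b1 *\<^sub>R u + b2 *\<^sub>R v + b3 *\<^sub>R w)) \<bullet> (c1 *\<^sub>R u + c2 *\<^sub>R v + c3 *\<^sub>R w)
    = (a1 * (b2 * c3 - b3 * c2) - a2 * (b1 * c3 - b3 * c1) + a3 * (b1 * c2 - b2 * c1)) * ((u \<times> v) \<bullet> w)"
  by (simp add: cross3_simps forall_3)

lemma triple_product_rotate: "(u \<times> v) \<bullet> w = (v \<times> w) \<bullet> (u::real^3)"
  by (simp add: cross3_simps forall_3)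

lemma symmetric_matrix_inner_commute:
  fixes M :: "real^3^3"
  assumes "transpose M = M"
  shows "x \<bullet> (M *v y) = y \<bullet> (M *v x)"
  by (metis assms dot_lmul_matrix inner_commute transpose_matrix_vector)

lemma quadratic_form_lincomb2:
  fixes M :: "real^3^3"
  assumes "transpose M = M"
  shows "(x *\<^sub>R u + y *\<^sub>R v) \<bullet> (M *v (x *\<^sub>R u + y *\<^sub>R v))
    = x\<^sup>2 * (u \<bullet> (M *v u)) + 2 * x * y * (u \<bullet> (M *v v)) + y\<^sup>2 * (v \<bullet> (M *v v))"
  using symmetric_matrix_inner_commute[OF assms, of v u]
  by (simp add: matrix_vector_right_distrib matrix_vector_mult_scaleR inner_add_left inner_add_right
      power2_eq_square algebra_simps)

lemma quadratic_form_lincomb3: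
  fixes M :: "real^3^3"
  assumes "transpose M = M"
  shows "(x *\<^sub>R u + y *\<^sub>R v + z *\<^sub>R w) \<bullet> (M *v (x *\<^sub>R u + y *\<^sub>R v + z *\<^sub>R w))
    = x\<^sup>2 * (u \<bullet> (M *v u)) + y\<^sup>2 * (v \<bullet> (M *v v)) + z\<^sup>2 * (w \<bullet> (M *v w))
      + 2 * x * y * (u \<bullet> (M *v v)) + 2 * x * z * (u \<bullet> (M *v w)) + 2 * y * z * (v \<bullet> (M *v w))"
  using symmetric_matrix_inner_commute[OF assms, of v u] symmetric_matrix_inner_commute[OF assms, of w u]
    symmetric_matrix_inner_commute[OF assms, of w v]
  by (simp add: matrix_vector_right_distrib matrix_vector_mult_scaleR inner_add_left inner_add_right
      power2_eq_square algebra_simps)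

lemma quadratic_form_scaleR_matrix: "x \<bullet> ((k *\<^sub>R M) *v x) = k * (x \<bullet> (M *v (x::real^3)))"
  by (simp add: scaleR_matrix_vector_assoc[symmetric])

lemma nondeg_conic_symmetric: "nondeg_conic M \<Longrightarrow> transpose M = M"
  by (simp add: nondeg_conic_def is_conic_def)

lemma nondeg_conic_kernel: "nondeg_conic M \<Longrightarrow> M *v x = 0 \<Longrightarrow> x = 0"
  by (metis nondeg_conic_def invertible_det_nz inj_matrix_vector_mult injD matrix_vector_mult_0_right)

text \<open>If a \<times> p \<noteq> 0, then M a and M p are both normal to the plane spanned by a and p, so a
  suitable combination of a and p lies in the kernel of M.\<close>
lemma nondeg_conic_conjugate_points:
  fixes a p :: "real^3"
  assumes M: "nondeg_conic M" and "on_conic a M" "on_conic p M" "a \<bullet> (M *v p) = 0"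
  shows "a \<times> p = 0"
proof (rule ccontr)
  assume n: "a \<times> p \<noteq> 0"
  have "p \<bullet> (M *v a) = 0"
    using assms(4) symmetric_matrix_inner_commute[OF nondeg_conic_symmetric[OF M]] by metis
  moreover have "a \<bullet> (M *v a) = 0" "p \<bullet> (M *v p) = 0"
    using assms(2,3) by (simp_all add: on_conic_def)
  moreover have "(a \<times> p) \<times> q = (a \<bullet> q) *\<^sub>R p - (p \<bullet> q) *\<^sub>R a" for q
    by (simp add: cross3_simps forall_3)
  ultimately obtain k l where k: "M *v a = k *\<^sub>R (a \<times> p)" and l: "M *v p = l *\<^sub>R (a \<times> p)"
    using assms(4) n cross_eq_0_imp_scaleR by (metis inner_commute scaleR_zero_left diff_zero)
  have "M *v (l *\<^sub>R a - k *\<^sub>R p) = 0"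
    by (simp add: matrix_vector_mult_diff_distrib matrix_vector_mult_scaleR k l)
  then have comb: "l *\<^sub>R a = k *\<^sub>R p"
    using nondeg_conic_kernel[OF M] by (metis eq_iff_diff_eq_0)
  have "l *\<^sub>R (a \<times> p) = 0" "k *\<^sub>R (a \<times> p) = 0"
    using arg_cong[OF comb, of "\<lambda>z. z \<times> p"] arg_cong[OF comb, of "\<lambda>z. a \<times> z"]
    by (simp_all add: cross_mult_left cross_mult_right)
  then have "M *v a = 0"
    using n k by simp
  then show False
    using n nondeg_conic_kernel[OF M] by force
qed

lemma nondeg_conic_chord_endpoints:
  assumes M: "nondeg_conic M" and "on_conic u M" "on_conic v M" "u \<times> v \<noteq> 0"
    and "on_conic (x *\<^sub>R u + y *\<^sub>R v) M"
  shows "x = 0 \<or> y = 0"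
proof -
  have "u \<bullet> (M *v v) \<noteq> 0"
    using nondeg_conic_conjugate_points[OF M] assms(2-4) by blast
  moreover have "2 * x * y * (u \<bullet> (M *v v)) = 0"
    using assms(2,3,5) by (simp add: on_conic_def quadratic_form_lincomb2[OF nondeg_conic_symmetric[OF M]])
  ultimately show ?thesis
    by simp
qed

lemma lincomb_eq_0_imp_coeffs_0:
  fixes u v :: "real^3"
  assumes "u \<times> v \<noteq> 0" "x *\<^sub>R u + y *\<^sub>R v = 0"
  shows "x = 0" "y = 0"
proof -
  have "(x *\<^sub>R u + y *\<^sub>R v) \<times> v = x *\<^sub>R (u \<times> v)" "u \<times> (x *\<^sub>R u + y *\<^sub>R v) = y *\<^sub>R (u \<times> v)"
    by (simp_all add: cross_add_left cross_add_right cross_mult_left cross_mult_right)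
  then show "x = 0" "y = 0"
    using assms by (metis cross_zero_left cross_zero_right scaleR_eq_0_iff)+
qed

lemma cross_neq_0_if_not_same_pt:
  assumes "pt a" "pt b" "\<not> same_pt a b"
  shows "a \<times> b \<noteq> 0"
proof
  assume "a \<times> b = 0"
  then obtain k where "b = k *\<^sub>R a"
    using cross_eq_0_imp_scaleR assms(1) by (auto simp: pt_def)
  then show False
    using assms by (auto simp: pt_def same_pt_def)
qed

lemma same_pt_if_scaleR: "q \<noteq> 0 \<Longrightarrow> q = c *\<^sub>R p \<Longrightarrow> same_pt p q"
  by (auto simp: same_pt_def)

lemma same_pt_sym: "same_pt p q \<Longrightarrow> same_pt q p"
  unfolding same_pt_def by (metis inverse_eq_divide left_inverse scaleR_one scaleR_scaleR divide_eq_0_iff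
      one_neq_zero)

lemma on_conic_scaleR: "on_conic p M \<Longrightarrow> on_conic (c *\<^sub>R p) M"
  by (simp add: on_conic_def matrix_vector_mult_scaleR)

lemma on_join_if_same_pt: "same_pt F G \<Longrightarrow> on_join G E F"
  by (auto simp: same_pt_def on_join_def dot_cross_self)

lemma nondeg_conic_not_collinear:
  assumes H: "nondeg_conic H" and "pt A" "pt B" "pt C"
    and "on_conic A H" "on_conic B H" "on_conic C H"
    and "\<not> same_pt A B" "\<not> same_pt A C" "\<not> same_pt B C"
  shows "(A \<times> B) \<bullet> C \<noteq> 0"
proof
  assume "(A \<times> B) \<bullet> C = 0"
  moreover have AB: "A \<times> B \<noteq> 0"
    using cross_neq_0_if_not_same_pt assms by blast
  ultimately obtain x y where C: "C = x *\<^sub>R A + y *\<^sub>R B"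
    using orthogonal_cross_imp_lincomb by blast
  then have "x = 0 \<or> y = 0"
    using nondeg_conic_chord_endpoints[OF H _ _ AB] assms(5-7) by simp
  then show False
    using C assms(4,9,10) same_pt_if_scaleR by (auto simp: pt_def)
qed

definition line_pair :: "real^3 \<Rightarrow> real^3 \<Rightarrow> real^3^3" where
  "line_pair u v = (\<chi> i j. u$i * v$j + v$i * u$j)"

lemma quadratic_form_line_pair: "x \<bullet> (line_pair u v *v x) = 2 * (u \<bullet> x) * (v \<bullet> x)"
  by (simp add: line_pair_def matrix_vector_mult_def inner_vec_def sum_3) (simp add: algebra_simps)

lemma det_line_pair: "det (line_pair u v) = 0"
  by (simp add: line_pair_def det_3) (simp add: algebra_simps)

lemma transpose_line_pair: "transpose (line_pair u v) = line_pair u v"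
  by (simp add: line_pair_def transpose_def vec_eq_iff)

lemma is_conic_line_pair:
  assumes "u \<noteq> 0" "v \<noteq> 0"
  shows "is_conic (line_pair u v)"
proof -
  have "line_pair u v \<noteq> 0"
  proof
    assume "line_pair u v = 0"
    then have entries: "u$i * v$j + v$i * u$j = 0" for i j
      by (simp add: line_pair_def vec_eq_iff)
    obtain i where "u$i \<noteq> 0"
      using assms(1) by (auto simp: vec_eq_iff)
    then have "v$j = 0" for j
      using entries[of i i] entries[of i j] by simp
    then show False
      using assms(2) by (simp add: vec_eq_iff)
  qed
  then show ?thesis
    by (simp add: is_conic_def transpose_line_pair)
qed

lemma unique_conic_through_proportional:
  assumes "unique_conic_through M S" "is_conic N" "\<forall>p\<in>S. on_conic p N"
  obtains c where "c \<noteq> 0" "N = c *\<^sub>R M"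
  using assms by (auto simp: unique_conic_through_def same_conic_def)

lemma unique_conic_through_on_conic_iff:
  assumes "unique_conic_through M S" "is_conic N" "\<forall>p\<in>S. on_conic p N"
  shows "on_conic x N \<longleftrightarrow> on_conic x M"
proof -
  obtain c where "c \<noteq> 0" "N = c *\<^sub>R M"
    using unique_conic_through_proportional[OF assms] .
  then show ?thesis
    by (simp add: on_conic_def quadratic_form_scaleR_matrix)
qed

lemma unique_conic_through_on_conic:
  assumes "unique_conic_through M S" "transpose N = N" "\<forall>p\<in>S. on_conic p N" "on_conic x M"
  shows "on_conic x N"
proof (cases "N = 0")
  case True
  then show ?thesis
    by (simp add: on_conic_def)
next
  case False
  then obtain c where "N = c *\<^sub>R M"
    using unique_conic_through_proportional[OF assms(1) _ assms(3)] assms(2) by (auto simp: is_conic_def)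
  then show ?thesis
    using assms(4) by (simp add: on_conic_def quadratic_form_scaleR_matrix)
qed

lemma det_scaleR_3: "det (k *\<^sub>R M) = k ^ 3 * det (M::real^3^3)"
  by (simp add: det_3 power3_eq_cube algebra_simps)

text \<open>A nondegenerate conic and a line pair are never proportional, as only the first has
  nonzero determinant.\<close>
lemma not_unique_conic_through_if_line_pair:
  assumes H: "nondeg_conic H" "\<forall>p\<in>S. on_conic p H"
    and "u \<noteq> 0" "v \<noteq> 0" "\<forall>p\<in>S. (u \<bullet> p) * (v \<bullet> p) = 0"
  shows "\<not> unique_conic_through M S"
proof
  assume M: "unique_conic_through M S"
  obtain c where c: "c \<noteq> 0" "H = c *\<^sub>R M"
    using unique_conic_through_proportional[OF M _ H(2)] H(1) by (auto simp: nondeg_conic_def)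
  obtain d where d: "d \<noteq> 0" "line_pair u v = d *\<^sub>R M"
    using unique_conic_through_proportional[OF M is_conic_line_pair[OF assms(3,4)]] assms(5)
    by (auto simp: on_conic_def quadratic_form_line_pair)
  have "line_pair u v = (d / c) *\<^sub>R H"
    using c d by simp
  then have "det (line_pair u v) = (d / c) ^ 3 * det H"
    by (simp add: det_scaleR_3)
  then show False
    using c(1) d(1) H(1) by (simp add: det_line_pair nondeg_conic_def)
qed

lemma not_unique_conic_through_if_D_is_A:
  assumes H: "nondeg_conic H"
    and "on_conic A H" "on_conic B H" "on_conic C H" "on_conic E H"
    and "A \<times> B \<noteq> 0" "C \<times> B \<noteq> 0" "same_pt D A"
  shows "\<not> unique_conic_through M {A, B, C, D, E}"
proof -
  obtain c where D: "D = c *\<^sub>R A"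
    using same_pt_sym[OF assms(8)] unfolding same_pt_def by blast
  define v where "v = (if C \<times> E \<noteq> 0 then C \<times> E else C \<times> B)"
  have "C \<noteq> 0"
    using assms(7) by auto
  then have "v \<bullet> E = 0"
    using cross_eq_0_imp_scaleR[of C E] by (auto simp: v_def dot_cross_self)
  moreover have "v \<noteq> 0" "v \<bullet> C = 0"
    using assms(7) by (auto simp: v_def dot_cross_self)
  ultimately have "\<forall>p\<in>{A, B, C, D, E}. ((A \<times> B) \<bullet> p) * (v \<bullet> p) = 0"
    by (simp add: D dot_cross_self)
  moreover have "\<forall>p\<in>{A, B, C, D, E}. on_conic p H"
    using D assms(2-5) on_conic_scaleR by simp
  ultimately show ?thesis
    using not_unique_conic_through_if_line_pair[OF H] assms(6) \<open>v \<noteq> 0\<close> by blast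
qed

lemma nondeg_conic_line_second_point_unique:
  assumes H: "nondeg_conic H" and L: "is_line L"
    and D: "pt D" "on_line D L" "on_conic D H"
    and F: "pt F" "on_line F L" "on_conic F H" "\<not> same_pt D F"
    and F': "pt F'" "on_line F' L" "on_conic F' H" "\<not> same_pt D F'"
  shows "same_pt F F'"
proof -
  have DF: "D \<times> F \<noteq> 0"
    using cross_neq_0_if_not_same_pt D(1) F(1,4) .
  have "L \<noteq> 0" "L \<bullet> D = 0" "L \<bullet> F = 0" "L \<bullet> F' = 0"
    using L D(2) F(2) F'(2) by (simp_all add: is_line_def on_line_def)
  then obtain x y where F'_xy: "F' = x *\<^sub>R D + y *\<^sub>R F"
    using on_line_lincomb DF by blast
  then have "x = 0 \<or> y = 0"
    using nondeg_conic_chord_endpoints[OF H D(3) F(3) DF] F'(3) by simp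
  then show ?thesis
    using F'_xy F'(1,4) same_pt_if_scaleR by (auto simp: pt_def)
qed

definition joins_through :: "real^3 \<Rightarrow> real^3^3 \<Rightarrow> real^3 \<Rightarrow> real^3 \<Rightarrow> real^3 \<Rightarrow> real^3 \<Rightarrow> real^3 \<Rightarrow> bool"
  where "joins_through G H A B C D L \<longleftrightarrow>
    (\<forall>E ME F.
       pt E \<and> on_conic E H \<and>
       unique_conic_through ME {A, B, C, D, E} \<and>
       pt F \<and> on_line F L \<and> on_conic F ME \<and> \<not> same_pt D F \<and>
       (\<forall>P. pt P \<and> on_line P L \<and> on_conic P ME \<longrightarrow> same_pt D P \<or> same_pt F P) \<and>
       \<not> same_pt E F
       \<longrightarrow> on_join G E F)"

lemma joins_throughI:
  assumes "\<And>E ME F. pt E \<Longrightarrow> on_conic E H \<Longrightarrow> unique_conic_through ME {A, B, C, D, E} \<Longrightarrow>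
    pt F \<Longrightarrow> on_line F L \<Longrightarrow> on_conic F ME \<Longrightarrow> \<not> same_pt D F \<Longrightarrow>
    (\<forall>P. pt P \<and> on_line P L \<and> on_conic P ME \<longrightarrow> same_pt D P \<or> same_pt F P) \<Longrightarrow>
    on_join G E F"
  shows "joins_through G H A B C D L"
  unfolding joins_through_def using assms by auto

lemma joins_through_rotate: "joins_through G H B C A D L \<longleftrightarrow> joins_through G H A B C D L"
proof -
  have "{B, C, A, D, E} = {A, B, C, D, E}" for E :: "real^3"
    by auto
  then show ?thesis
    by (simp add: joins_through_def)
qed

lemma joins_through_if_D_is_A:
  assumes "nondeg_conic H" "on_conic A H" "on_conic B H" "on_conic C H"
    and "A \<times> B \<noteq> 0" "C \<times> B \<noteq> 0" "same_pt D A"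
  shows "joins_through G H A B C D L"
proof (rule joins_throughI)
  fix E ME
  assume "on_conic E H" "unique_conic_through ME {A, B, C, D, E}"
  then show "on_join G E F" for F
    using not_unique_conic_through_if_D_is_A[OF assms(1-4) _ assms(5-7)] by blast
qed

lemma joins_through_if_vertex_on_line:
  assumes "X \<in> {A, B, C}" "pt X" "on_line X L" "\<not> same_pt D X"
  shows "joins_through X H A B C D L"
proof (rule joins_throughI)
  fix E ME F
  assume "unique_conic_through ME {A, B, C, D, E}"
    and F: "\<forall>P. pt P \<and> on_line P L \<and> on_conic P ME \<longrightarrow> same_pt D P \<or> same_pt F P"
  then have "on_conic X ME"
    using assms(1) by (auto simp: unique_conic_through_def)
  then have "same_pt F X"
    using F assms(2-4) by blast
  then show "on_join X E F"
    by (rule on_join_if_same_pt)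
qed

text \<open>If L is tangent to H at D, no E is admissible at all.\<close>
lemma joins_through_if_D_on_conic:
  assumes H: "nondeg_conic H" and "pt A" "on_conic A H" "on_conic B H" "on_conic C H"
    and L: "is_line L" and D: "pt D" "on_line D L" "on_conic D H"
  obtains G where "pt G" "on_conic G H" "joins_through G H A B C D L"
proof -
  have F_on_H: "on_conic F H"
    if "on_conic E H" "unique_conic_through ME {A, B, C, D, E}" "on_conic F ME" for E ME F
  proof -
    have "is_conic H"
      using H by (simp add: nondeg_conic_def)
    moreover have "\<forall>p\<in>{A, B, C, D, E}. on_conic p H"
      using assms(3-5) D(3) that(1) by simp
    ultimately show ?thesis
      using unique_conic_through_on_conic_iff[OF that(2)] that(3) by blast
  qed
  consider (secant) G where "pt G" "on_line G L" "on_conic G H" "\<not> same_pt D G"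
    | (tangent) "\<forall>F. pt F \<and> on_line F L \<and> on_conic F H \<longrightarrow> same_pt D F"
    by blast
  then show ?thesis
  proof cases
    case secant
    have "joins_through G H A B C D L"
    proof (rule joins_throughI)
      fix E ME F
      assume E: "on_conic E H" "unique_conic_through ME {A, B, C, D, E}"
        and F: "pt F" "on_line F L" "on_conic F ME" "\<not> same_pt D F"
      have "same_pt F G"
        using nondeg_conic_line_second_point_unique[OF H L D F(1,2) F_on_H[OF E F(3)] F(4) secant] .
      then show "on_join G E F"
        by (rule on_join_if_same_pt)
    qed
    then show ?thesis
      using that secant by blast
  next
    case tangent
    have "joins_through A H A B C D L"
    proof (rule joins_throughI)
      fix E ME F
      assume E: "on_conic E H" "unique_conic_through ME {A, B, C, D, E}"
        and F: "pt F" "on_line F L" "on_conic F ME" "\<not> same_pt D F"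
      then show "on_join A E F"
        using tangent F_on_H[OF E F(3)] by blast
    qed
    then show ?thesis
      using that assms(2,3) by blast
  qed
qed

locale generic_position =
  fixes H :: "real^3^3" and A B C D L :: "real^3"
  assumes nondeg: "nondeg_conic H"
    and pts: "pt A" "pt B" "pt C"
    and on_H: "on_conic A H" "on_conic B H" "on_conic C H"
    and distinct: "\<not> same_pt A B" "\<not> same_pt A C" "\<not> same_pt B C"
    and line: "is_line L" "on_line D L"
    and D_off_H: "\<not> on_conic D H"
    and D_off_BC: "(B \<times> C) \<bullet> D \<noteq> 0"
    and L_avoids: "L \<bullet> A \<noteq> 0" "L \<bullet> B \<noteq> 0" "L \<bullet> C \<noteq> 0"
begin

lemma H_symmetric: "transpose H = H"
  using nondeg_conic_symmetric[OF nondeg] .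

lemma A_nonzero: "A \<noteq> 0"
  using pts(1) by (simp add: pt_def)

lemma L_nonzero: "L \<noteq> 0"
  using line(1) by (simp add: is_line_def)

lemma L_D: "L \<bullet> D = 0"
  using line by (simp add: on_line_def)

lemma quad_vertices: "A \<bullet> (H *v A) = 0" "B \<bullet> (H *v B) = 0" "C \<bullet> (H *v C) = 0"
  using on_H by (simp_all add: on_conic_def)

lemma ABC_not_collinear: "(A \<times> B) \<bullet> C \<noteq> 0"
  using nondeg_conic_not_collinear[OF nondeg pts on_H distinct] .

lemma sides_nonzero: "A \<times> B \<noteq> 0" "A \<times> C \<noteq> 0" "B \<times> C \<noteq> 0"
  using cross_neq_0_if_not_same_pt pts distinct by blast+

definition X where "X = L \<times> (B \<times> C)"

definition hX where "hX = X \<bullet> (H *v X)"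
definition hD where "hD = D \<bullet> (H *v D)"
definition bAX where "bAX = A \<bullet> (H *v X)"
definition bAD where "bAD = A \<bullet> (H *v D)"
definition bXD where "bXD = X \<bullet> (H *v D)"

lemma X_on_L: "L \<bullet> X = 0"
  by (simp add: X_def dot_cross_self)

lemma X_on_BC: "(B \<times> C) \<bullet> X = 0"
  by (simp add: X_def dot_cross_self)

lemma X_D_independent: "X \<times> D \<noteq> 0"
proof -
  have "X \<times> D = (L \<bullet> D) *\<^sub>R (B \<times> C) - ((B \<times> C) \<bullet> D) *\<^sub>R L"
    by (simp add: X_def cross3_simps forall_3)
  then show ?thesis
    using L_D D_off_BC L_nonzero by simp
qed

lemma on_L_lincomb:
  assumes "L \<bullet> F = 0"
  obtains r t where "F = r *\<^sub>R X + t *\<^sub>R D"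
  using on_line_lincomb[OF L_nonzero X_on_L L_D assms X_D_independent] by blast

lemma hD_nonzero: "hD \<noteq> 0"
  using D_off_H by (simp add: hD_def on_conic_def)

lemma hX_nonzero: "hX \<noteq> 0"
proof
  assume "hX = 0"
  obtain x y where X: "X = x *\<^sub>R B + y *\<^sub>R C"
    using orthogonal_cross_imp_lincomb[OF sides_nonzero(3) X_on_BC] by blast
  then have "x = 0 \<or> y = 0"
    using nondeg_conic_chord_endpoints[OF nondeg on_H(2,3) sides_nonzero(3)] \<open>hX = 0\<close> by (simp add: hX_def on_conic_def)
  then have "X = 0"
    using X X_on_L L_avoids by auto
  then show False
    using X_D_independent by simp
qed

lemma AXD_nonzero: "(A \<times> X) \<bullet> D \<noteq> 0"
proof
  assume "(A \<times> X) \<bullet> D = 0"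
  then have "(X \<times> D) \<bullet> A = 0"
    by (simp add: triple_product_rotate[of A X D])
  then obtain x y where "A = x *\<^sub>R X + y *\<^sub>R D"
    using orthogonal_cross_imp_lincomb[OF X_D_independent] by blast
  then have "L \<bullet> A = x * (L \<bullet> X) + y * (L \<bullet> D)"
    by (simp add: inner_add_right)
  then show False
    using L_avoids(1) X_on_L L_D by simp
qed

text \<open>Coordinates of the fixed point in the basis A, X, D, as forced by phi_G_identity.\<close>
definition G where
  "G = (hX * hD) *\<^sub>R A + (-2 * (hD * bAX - 2 * bAD * bXD)) *\<^sub>R X + (-2 * hX * bAD) *\<^sub>R D"

lemma G_on_conic: "on_conic G H"
  unfolding on_conic_def G_def quadratic_form_lincomb3[OF H_symmetric] quad_vertices(1)
  unfolding hX_def[symmetric] hD_def[symmetric] bAX_def[symmetric] bAD_def[symmetric] bXD_def[symmetric]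
  by algebra

lemma G_nonzero: "G \<noteq> 0"
proof -
  have "(G \<times> X) \<bullet> D = (hX * hD) * ((A \<times> X) \<bullet> D)"
    by (simp add: G_def cross_add_left Cross3.left_diff_distrib cross_mult_left inner_add_left inner_diff_left
        dot_cross_self)
  then show ?thesis
    using hX_nonzero hD_nonzero AXD_nonzero by auto
qed

text \<open>For a point F = r X + t D of L, the line AE meets L at phi r t (see phi_on_line_AE).\<close>
definition phi :: "real \<Rightarrow> real \<Rightarrow> real^3" where
  "phi r t = (t * hD) *\<^sub>R X + (- (r * hX + 2 * t * bXD)) *\<^sub>R D"

lemma phi_on_L: "L \<bullet> phi r t = 0"
  by (simp add: phi_def inner_add_right X_on_L L_D)

lemma A_phi_independent:
  assumes "r \<noteq> 0"
  shows "A \<times> phi r t \<noteq> 0"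
proof
  assume "A \<times> phi r t = 0"
  then obtain k where k: "phi r t = k *\<^sub>R A"
    using cross_eq_0_imp_scaleR A_nonzero by blast
  then have "k * (L \<bullet> A) = 0"
    using phi_on_L[of r t] by simp
  then have "(t * hD) *\<^sub>R X + (- (r * hX + 2 * t * bXD)) *\<^sub>R D = 0"
    using k L_avoids(1) by (simp add: phi_def)
  note lincomb_eq_0_imp_coeffs_0[OF X_D_independent this]
  then show False
    using assms hD_nonzero hX_nonzero by simp
qed

lemma not_unique_conic_through_if_E_is_A:
  assumes "E = a *\<^sub>R A"
  shows "\<not> unique_conic_through M {A, B, C, D, E}"
proof
  assume M: "unique_conic_through M {A, B, C, D, E}"
  have "C \<times> D \<noteq> 0" "B \<times> D \<noteq> 0"
    using cross_eq_0_imp_scaleR[of C D] cross_eq_0_imp_scaleR[of B D] pts on_H D_off_H on_conic_scaleR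
    by (auto simp: pt_def)
  then have conics: "is_conic (line_pair (A \<times> B) (C \<times> D))" "is_conic (line_pair (A \<times> C) (B \<times> D))"
    using is_conic_line_pair sides_nonzero by blast+
  have "\<forall>p\<in>{A, B, C, D, E}. on_conic p (line_pair (A \<times> B) (C \<times> D))"
    "\<forall>p\<in>{A, B, C, D, E}. on_conic p (line_pair (A \<times> C) (B \<times> D))"
    by (simp_all add: assms on_conic_def quadratic_form_line_pair dot_cross_self)
  then have same_zeros:
    "on_conic x (line_pair (A \<times> B) (C \<times> D)) \<longleftrightarrow> on_conic x (line_pair (A \<times> C) (B \<times> D))" for x
    using unique_conic_through_on_conic_iff[OF M] conics by blast
  have triple: "(A \<times> C) \<bullet> B = - ((A \<times> B) \<bullet> C)" "(B \<times> D) \<bullet> A = (A \<times> B) \<bullet> D"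
    "(C \<times> D) \<bullet> A = (A \<times> C) \<bullet> D"
    by (simp_all add: cross3_simps)
  have "(A \<times> B) \<bullet> D = 0"
    using same_zeros[of "A + B"] ABC_not_collinear
    by (simp add: on_conic_def quadratic_form_line_pair inner_add_right dot_cross_self triple)
  moreover have "(A \<times> C) \<bullet> D = 0"
    using same_zeros[of "A + C"] ABC_not_collinear
    by (simp add: on_conic_def quadratic_form_line_pair inner_add_right dot_cross_self triple)
  ultimately obtain x y where D: "D = x *\<^sub>R A + y *\<^sub>R B" "y * ((A \<times> C) \<bullet> B) = 0"
    using orthogonal_cross_imp_lincomb[OF sides_nonzero(1)] by (fastforce simp: inner_add_right dot_cross_self)
  then have "D = x *\<^sub>R A"
    using ABC_not_collinear triple(1) by simp
  then show False
    using D_off_H on_H(1) on_conic_scaleR by simp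
qed

text \<open>N is the conic of the pencil spanned by H and the line pair EA, BC that passes through D;
  being a combination of conics through A, B, C, E it is the conic through A, B, C, D, E.\<close>
lemma phi_on_line_AE:
  assumes E: "on_conic E H" and M: "unique_conic_through M {A, B, C, D, E}"
    and F: "on_conic (r *\<^sub>R X + t *\<^sub>R D) M" and r: "r \<noteq> 0"
  shows "(E \<times> A) \<bullet> phi r t = 0"
proof -
  define pX where "pX = (E \<times> A) \<bullet> X"
  define pD where "pD = (E \<times> A) \<bullet> D"
  define \<beta> where "\<beta> = (B \<times> C) \<bullet> D"
  define N where "N = (2 * pD * \<beta>) *\<^sub>R H - hD *\<^sub>R line_pair (E \<times> A) (B \<times> C)"
  have quad_N: "x \<bullet> (N *v x) = 2 * pD * \<beta> * (x \<bullet> (H *v x)) - hD * (2 * ((E \<times> A) \<bullet> x) * ((B \<times> C) \<bullet> x))"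
    for x
    by (simp add: N_def matrix_vector_mult_diff_rdistrib inner_diff_right quadratic_form_scaleR_matrix
        quadratic_form_line_pair)
  have "transpose N = N"
    using H_symmetric transpose_line_pair by (simp add: N_def transpose_scalar transpose_def vec_eq_iff)
  moreover have "\<forall>p\<in>{A, B, C, D, E}. on_conic p N"
    using E quad_vertices by (simp add: on_conic_def quad_N dot_cross_self pD_def \<beta>_def hD_def)
  ultimately have "on_conic (r *\<^sub>R X + t *\<^sub>R D) N"
    using unique_conic_through_on_conic[OF M] F by blast
  then have "2 * pD * \<beta> * (r\<^sup>2 * hX + 2 * r * t * bXD + t\<^sup>2 * hD)
      - hD * (2 * (r * pX + t * pD) * (t * \<beta>)) = 0"
    unfolding on_conic_def quad_N quadratic_form_lincomb2[OF H_symmetric]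
    by (simp add: inner_add_right pX_def pD_def \<beta>_def X_on_BC hX_def bXD_def hD_def)
  moreover have "(E \<times> A) \<bullet> phi r t = t * hD * pX - (r * hX + 2 * t * bXD) * pD"
    by (simp add: phi_def inner_add_right pX_def pD_def algebra_simps)
  ultimately have "r * \<beta> * ((E \<times> A) \<bullet> phi r t) = 0"
    by algebra
  then show ?thesis
    using r D_off_BC by (simp add: \<beta>_def)
qed

lemma phi_G_identity:
  "2 * (A \<bullet> (H *v phi r t)) * ((phi r t \<times> (r *\<^sub>R X + t *\<^sub>R D)) \<bullet> G)
    = (phi r t \<bullet> (H *v phi r t)) * ((A \<times> (r *\<^sub>R X + t *\<^sub>R D)) \<bullet> G)"
proof -
  define p2 where "p2 = t * hD"
  define p3 where "p3 = - (r * hX + 2 * t * bXD)"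
  define g2 where "g2 = -2 * (hD * bAX - 2 * bAD * bXD)"
  define g3 where "g3 = -2 * hX * bAD"
  have phi: "phi r t = 0 *\<^sub>R A + p2 *\<^sub>R X + p3 *\<^sub>R D"
    by (simp add: phi_def p2_def p3_def)
  have G: "G = (hX * hD) *\<^sub>R A + g2 *\<^sub>R X + g3 *\<^sub>R D"
    by (simp add: G_def g2_def g3_def)
  have F: "r *\<^sub>R X + t *\<^sub>R D = 0 *\<^sub>R A + r *\<^sub>R X + t *\<^sub>R D"
    by simp
  have A: "A = 1 *\<^sub>R A + 0 *\<^sub>R X + 0 *\<^sub>R D"
    by simp
  have "(phi r t \<times> (r *\<^sub>R X + t *\<^sub>R D)) \<bullet> G = (p2 * t - p3 * r) * (hX * hD) * ((A \<times> X) \<bullet> D)"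
    unfolding phi G by (subst F, subst triple_product_lincomb3) (simp add: algebra_simps)
  moreover have "(A \<times> (r *\<^sub>R X + t *\<^sub>R D)) \<bullet> G = (r * g3 - t * g2) * ((A \<times> X) \<bullet> D)"
    unfolding G by (subst F, subst (1) A, subst triple_product_lincomb3) simp
  moreover have "A \<bullet> (H *v phi r t) = p2 * bAX + p3 * bAD"
    by (simp add: phi matrix_vector_right_distrib matrix_vector_mult_scaleR inner_add_right bAX_def bAD_def)
  moreover have "phi r t \<bullet> (H *v phi r t) = p2\<^sup>2 * hX + 2 * p2 * p3 * bXD + p3\<^sup>2 * hD"
    unfolding phi_def p2_def[symmetric] p3_def[symmetric] quadratic_form_lincomb2[OF H_symmetric]
    by (simp add: hX_def bXD_def hD_def)
  ultimately show ?thesis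
    unfolding p2_def p3_def g2_def g3_def by algebra
qed

lemma G_on_join:
  assumes E: "on_conic E H" and M: "unique_conic_through M {A, B, C, D, E}"
    and F: "on_conic (r *\<^sub>R X + t *\<^sub>R D) M" and r: "r \<noteq> 0"
  shows "on_join G E (r *\<^sub>R X + t *\<^sub>R D)"
proof -
  let ?P = "phi r t" and ?F = "r *\<^sub>R X + t *\<^sub>R D"
  have "(A \<times> ?P) \<bullet> E = 0"
    using phi_on_line_AE[OF assms] triple_product_rotate[of E A ?P] by simp
  then obtain a b where Eab: "E = a *\<^sub>R A + b *\<^sub>R ?P"
    using orthogonal_cross_imp_lincomb[OF A_phi_independent[OF r]] by blast
  have b: "b \<noteq> 0"
    using Eab M not_unique_conic_through_if_E_is_A by force
  have "b * (2 * a * (A \<bullet> (H *v ?P)) + b * (?P \<bullet> (H *v ?P))) = 0"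
    using E unfolding on_conic_def Eab quadratic_form_lincomb2[OF H_symmetric] quad_vertices(1)
    by (simp add: power2_eq_square algebra_simps)
  then have E_on_H: "2 * a * (A \<bullet> (H *v ?P)) + b * (?P \<bullet> (H *v ?P)) = 0"
    using b by simp
  have "A \<bullet> (H *v ?P) \<noteq> 0"
  proof
    assume "A \<bullet> (H *v ?P) = 0"
    then have "on_conic ?P H"
      using E_on_H b by (simp add: on_conic_def)
    then show False
      using nondeg_conic_conjugate_points[OF nondeg on_H(1)] \<open>A \<bullet> (H *v ?P) = 0\<close>
        A_phi_independent[OF r] by blast
  qed
  moreover have "(E \<times> ?F) \<bullet> G = a * ((A \<times> ?F) \<bullet> G) + b * ((?P \<times> ?F) \<bullet> G)"
    by (simp add: Eab cross_add_left cross_mult_left inner_add_left)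
  then have "2 * (A \<bullet> (H *v ?P)) * ((E \<times> ?F) \<bullet> G)
      = (2 * a * (A \<bullet> (H *v ?P)) + b * (?P \<bullet> (H *v ?P))) * ((A \<times> ?F) \<bullet> G)"
    using phi_G_identity[of r t] by (simp add: algebra_simps)
  ultimately show ?thesis
    using E_on_H by (simp add: on_join_def)
qed

lemma joins_through_G: "joins_through G H A B C D L"
proof (rule joins_throughI)
  fix E M F
  assume "on_conic E H" "unique_conic_through M {A, B, C, D, E}"
    and F: "pt F" "on_line F L" "on_conic F M" "\<not> same_pt D F"
  obtain r t where rt: "F = r *\<^sub>R X + t *\<^sub>R D"
    using on_L_lincomb F(2) by (auto simp: on_line_def)
  have "r \<noteq> 0"
    using rt F(1,4) same_pt_if_scaleR by (auto simp: pt_def)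
  then show "on_join G E F"
    using G_on_join \<open>on_conic E H\<close> \<open>unique_conic_through M {A, B, C, D, E}\<close> F(3) rt by blast
qed

end

lemma joins_through_if_D_is_vertex:
  assumes "nondeg_conic H" "pt A" "pt B" "pt C"
    and "on_conic A H" "on_conic B H" "on_conic C H"
    and "\<not> same_pt A B" "\<not> same_pt A C" "\<not> same_pt B C"
    and "same_pt D A \<or> same_pt D B \<or> same_pt D C"
  shows "joins_through G H A B C D L"
proof -
  have "A \<times> B \<noteq> 0" "A \<times> C \<noteq> 0" "B \<times> C \<noteq> 0"
    using cross_neq_0_if_not_same_pt assms(2-4,8-10) by blast+
  then have "B \<times> A \<noteq> 0" "C \<times> A \<noteq> 0" "C \<times> B \<noteq> 0"
    using cross_skew by (metis neg_equal_0_iff_equal)+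
  then show ?thesis
    using assms(11) joins_through_if_D_is_A[OF assms(1,5-7)] joins_through_if_D_is_A[OF assms(1,6,7,5)]
      joins_through_if_D_is_A[OF assms(1,7,5,6)] joins_through_rotate \<open>A \<times> B \<noteq> 0\<close> \<open>B \<times> C \<noteq> 0\<close>
      \<open>A \<times> C \<noteq> 0\<close>
    by metis
qed

lemma joins_through_generic:
  assumes H: "nondeg_conic H" and "pt A" "pt B" "pt C"
    and "on_conic A H" "on_conic B H" "on_conic C H"
    and "\<not> same_pt A B" "\<not> same_pt A C" "\<not> same_pt B C"
    and "is_line L" "pt D" "on_line D L" "\<not> on_conic D H" "\<not> same_pt D C"
    and "L \<bullet> A \<noteq> 0" "L \<bullet> B \<noteq> 0" "L \<bullet> C \<noteq> 0"
  obtains G where "pt G" "on_conic G H" "joins_through G H A B C D L"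
proof (cases "(B \<times> C) \<bullet> D = 0")
  case False
  then interpret generic_position H A B C D L
    using assms by unfold_locales auto
  show ?thesis
    using that G_nonzero G_on_conic joins_through_G by (simp add: pt_def)
next
  case True
  have "B \<times> C \<noteq> 0" "(A \<times> B) \<bullet> C \<noteq> 0"
    using cross_neq_0_if_not_same_pt nondeg_conic_not_collinear[OF assms(1-10)] assms by blast+
  then obtain x y where D: "D = x *\<^sub>R B + y *\<^sub>R C"
    using True orthogonal_cross_imp_lincomb by blast
  have "x \<noteq> 0"
    using D assms(12,15) same_pt_if_scaleR same_pt_sym by (fastforce simp: pt_def)
  then have "(C \<times> A) \<bullet> D \<noteq> 0"
    using D \<open>(A \<times> B) \<bullet> C \<noteq> 0\<close> by (simp add: inner_add_right dot_cross_self triple_product_rotate[of C A B])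
  then interpret generic_position H B C A D L
    using assms same_pt_sym by unfold_locales auto
  show ?thesis
    using that G_nonzero G_on_conic joins_through_G joins_through_rotate by (simp add: pt_def)
qed

theorem fact2p1:
  fixes MH :: "real^3^3" and A B C D L :: "real^3"
  assumes "nondeg_conic MH"
    and "pt A" "pt B" "pt C"
    and "on_conic A MH" "on_conic B MH" "on_conic C MH"
    and "\<not> same_pt A B" "\<not> same_pt A C" "\<not> same_pt B C"
    and "is_line L" "pt D" "on_line D L"
  shows "\<exists>G. pt G \<and> on_conic G MH \<and>
    (\<forall>E ME F.
       pt E \<and> on_conic E MH \<and>
       unique_conic_through ME {A, B, C, D, E} \<and>
       pt F \<and> on_line F L \<and> on_conic F ME \<and> \<not> same_pt D F \<and>
       (\<forall>P. pt P \<and> on_line P L \<and> on_conic P ME \<longrightarrow> same_pt D P \<or> same_pt F P) \<and>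
       \<not> same_pt E F
       \<longrightarrow> on_join G E F)"
proof -
  have "\<exists>G. pt G \<and> on_conic G MH \<and> joins_through G MH A B C D L"
  proof (cases "same_pt D A \<or> same_pt D B \<or> same_pt D C")
    case True
    then show ?thesis
      using joins_through_if_D_is_vertex assms by blast
  next
    case D_not_vertex: False
    consider (vertex_on_L) X where "X \<in> {A, B, C}" "on_line X L"
      | (D_on_conic) "on_conic D MH"
      | (generic) "\<not> on_conic D MH" "L \<bullet> A \<noteq> 0" "L \<bullet> B \<noteq> 0" "L \<bullet> C \<noteq> 0"
      by (auto simp: on_line_def)
    then show ?thesis
    proof cases
      case vertex_on_L
      then show ?thesis
        using joins_through_if_vertex_on_line[of X A B C] D_not_vertex assms by blast
    next
      case D_on_conic
      then show ?thesis
        using joins_through_if_D_on_conic assms by metis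
    next
      case generic
      then show ?thesis
        using joins_through_generic D_not_vertex assms by metis
    qed
  qed
  then show ?thesis
    unfolding joins_through_def .
qed

end
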